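(* Let $G$ be a connected graph with $n$ vertices. Then \[ Kf(G)\leq\frac{n-1}{n}\sum_{i=1}^n\alpha_i(G)^{-1}. \]
   Context: $G$ is a finite simple graph with vertex set $[n]$ and Laplacian matrix $\mathcal{L}_G=D-A$. For a vertex $i$, $\alpha_i(G)=\min\{\mathbf{x}^\top\mathcal{L}_G\mathbf{x} : \mathbf{x}\in\mathbb{R}^n_+,\ \sum_j x_j^2=1,\ x_i=0\}$ (the inverse Perron value of $i$); for connected $G$ this equals the smallest eigenvalue of the principal submatrix $\mathcal{L}_G(i)$ obtained by deleting row and column $i$. The resistance distance $r_{ij}(G)$ is the effective resistance between $i$ and $j$ when every edge is a unit resistor, and the Kirchhoff index is $Kf(G)=\sum_{\{i,j\}\subseteq V(G)}r_{ij}(G)$ (sum over unordered pairs). *)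

theory Defs
  imports Complex_Main
begin

definition simple_graph :: "nat \<Rightarrow> (nat \<Rightarrow> nat \<Rightarrow> bool) \<Rightarrow> bool" where
  "simple_graph n E \<longleftrightarrow>
     (\<forall>u v. E u v \<longrightarrow> u \<in> {1..n} \<and> v \<in> {1..n}) \<and>
     (\<forall>u v. E u v \<longleftrightarrow> E v u) \<and> (\<forall>u. \<not> E u u)"

definition graph_connected :: "nat \<Rightarrow> (nat \<Rightarrow> nat \<Rightarrow> bool) \<Rightarrow> bool" where
  "graph_connected n E \<longleftrightarrow> (\<forall>u\<in>{1..n}. \<forall>v\<in>{1..n}. E\<^sup>*\<^sup>* u v)"

definition degree :: "nat \<Rightarrow> (nat \<Rightarrow> nat \<Rightarrow> bool) \<Rightarrow> nat \<Rightarrow> nat" where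
  "degree n E u = card {v \<in> {1..n}. E u v}"

definition laplacian :: "nat \<Rightarrow> (nat \<Rightarrow> nat \<Rightarrow> bool) \<Rightarrow> nat \<Rightarrow> nat \<Rightarrow> real" where
  "laplacian n E i j =
     (if i = j then real (degree n E i) else 0) - (if E i j then 1 else 0)"

definition lap_apply :: "nat \<Rightarrow> (nat \<Rightarrow> nat \<Rightarrow> bool) \<Rightarrow> (nat \<Rightarrow> real) \<Rightarrow> nat \<Rightarrow> real" where
  "lap_apply n E x i = (\<Sum>j=1..n. laplacian n E i j * x j)"

definition lap_quad :: "nat \<Rightarrow> (nat \<Rightarrow> nat \<Rightarrow> bool) \<Rightarrow> (nat \<Rightarrow> real) \<Rightarrow> real" where
  "lap_quad n E x = (\<Sum>i=1..n. x i * lap_apply n E x i)"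

text \<open>Inverse Perron value alpha_i(G): minimum of x^T L x over nonnegative unit
  vectors with x_i = 0 (written as an infimum; the minimum is attained).\<close>
definition inverse_perron :: "nat \<Rightarrow> (nat \<Rightarrow> nat \<Rightarrow> bool) \<Rightarrow> nat \<Rightarrow> real" where
  "inverse_perron n E i =
     Inf {lap_quad n E x | x. (\<forall>j\<in>{1..n}. x j \<ge> 0) \<and> (\<Sum>j=1..n. (x j)\<^sup>2) = 1 \<and> x i = 0}"

text \<open>Effective resistance: inject a unit current at i and extract it at j;
  the node potentials v satisfy L v = e_i - e_j and r_ij = v_i - v_j.\<close>
definition resistance :: "nat \<Rightarrow> (nat \<Rightarrow> nat \<Rightarrow> bool) \<Rightarrow> nat \<Rightarrow> nat \<Rightarrow> real" where
  "resistance n E i j =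
     (THE r. \<exists>v. (\<forall>u\<in>{1..n}. lap_apply n E v u =
                    (if u = i then 1 else 0) - (if u = j then 1 else 0)) \<and> r = v i - v j)"

definition kirchhoff :: "nat \<Rightarrow> (nat \<Rightarrow> nat \<Rightarrow> bool) \<Rightarrow> real" where
  "kirchhoff n E = (\<Sum>i=1..n. \<Sum>j=i+1..n. resistance n E i j)"

end

theory Submission
  imports Defs "HOL-Analysis.Convex" "Jordan_Normal_Form.Determinant"
begin

(* Let g be the Moore-Penrose pseudoinverse of the Laplacian L (its columns g_b solve
   L g_b = e_b - 1/n with mean zero). Then r_ij = g_ii + g_jj - 2 g_ij, so Kf(G) = n tr g.
   For a vertex i, the vector w = g_ii - g_i vanishes at i, has coordinate sum n g_ii, and
   satisfies w^T L w = g_ii. Testing alpha_i with |w| / ||w|| (taking absolute values does not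
   increase x^T L x) gives alpha_i <= g_ii / ||w||^2, while Cauchy-Schwarz over the n - 1
   vertices other than i gives (n g_ii)^2 <= (n - 1) ||w||^2. As alpha_i > 0 (from
   x_j^2 <= r_ij x^T L x whenever x_i = 0), 1/alpha_i >= n^2 g_ii / (n - 1); summing over i
   yields the bound. *)

definition lap_form :: "nat \<Rightarrow> (nat \<Rightarrow> nat \<Rightarrow> bool) \<Rightarrow> (nat \<Rightarrow> real) \<Rightarrow> (nat \<Rightarrow> real) \<Rightarrow> real" where
  "lap_form n E x y = (\<Sum>u=1..n. x u * lap_apply n E y u)"

definition arcs :: "nat \<Rightarrow> (nat \<Rightarrow> nat \<Rightarrow> bool) \<Rightarrow> (nat \<times> nat) set" where
  "arcs n E = {p \<in> {1..n} \<times> {1..n}. E (fst p) (snd p)}"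

lemma lap_quad_eq_lap_form: "lap_quad n E x = lap_form n E x x"
  unfolding lap_quad_def lap_form_def ..

lemma lap_apply_diff: "lap_apply n E (\<lambda>u. f u - h u) w = lap_apply n E f w - lap_apply n E h w"
  unfolding lap_apply_def by (simp add: right_diff_distrib sum_subtractf)

lemma lap_apply_scale: "lap_apply n E (\<lambda>u. c * f u) w = c * lap_apply n E f w"
  unfolding lap_apply_def by (simp add: sum_distrib_left algebra_simps)

lemma lap_form_diff_right: "lap_form n E x (\<lambda>u. f u - h u) = lap_form n E x f - lap_form n E x h"
  unfolding lap_form_def lap_apply_diff by (simp add: right_diff_distrib sum_subtractf)

lemma lap_form_scale_left: "lap_form n E (\<lambda>u. c * f u) y = c * lap_form n E f y"
  unfolding lap_form_def by (simp add: sum_distrib_left algebra_simps)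

lemma lap_form_scale_right: "lap_form n E x (\<lambda>u. c * f u) = c * lap_form n E x f"
  unfolding lap_form_def lap_apply_scale by (simp add: sum_distrib_left algebra_simps)

lemma sum_upper_triangle_symmetric:
  fixes f :: "nat \<Rightarrow> nat \<Rightarrow> 'a::comm_semiring_1"
  assumes "\<And>i j. f i j = f j i" and "\<And>i. f i i = 0"
  shows "2 * (\<Sum>i=1..n. \<Sum>j=i+1..n. f i j) = (\<Sum>i=1..n. \<Sum>j=1..n. f i j)"
proof (induction n)
  case 0
  then show ?case by simp
next
  case (Suc n)
  have "(\<Sum>i=1..Suc n. \<Sum>j=i+1..Suc n. f i j) = (\<Sum>i=1..n. (\<Sum>j=i+1..n. f i j) + f i (Suc n))"
    by (simp add: sum.distrib)
  moreover have "(\<Sum>j=1..n. f (Suc n) j) = (\<Sum>i=1..n. f i (Suc n))"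
    using assms(1) by metis
  ultimately show ?case
    using Suc.IH assms(2) by (simp add: sum.distrib algebra_simps mult_2)
qed

locale graph_laplacian =
  fixes n :: nat and E :: "nat \<Rightarrow> nat \<Rightarrow> bool"
  assumes simple: "simple_graph n E"
begin

lemma adj_sym: "E u v \<longleftrightarrow> E v u"
  using simple by (simp add: simple_graph_def)

lemma adj_vertices: "E u v \<Longrightarrow> u \<in> {1..n} \<and> v \<in> {1..n}"
  using simple unfolding simple_graph_def by blast

lemma lap_apply_eq_sum_neighbours:
  "lap_apply n E y u = (\<Sum>v=1..n. if E u v then y u - y v else 0)"
proof -
  have deg: "real (Defs.degree n E u) = (\<Sum>v=1..n. if E u v then 1 else 0)"
    unfolding Defs.degree_def by (simp add: sum.If_cases Int_def conj_commute)
  have "lap_apply n E y u =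
      (\<Sum>j=1..n. if u = j then real (Defs.degree n E u) * y u else 0) - (\<Sum>j=1..n. if E u j then y j else 0)"
    unfolding lap_apply_def laplacian_def sum_subtractf[symmetric]
    by (intro sum.cong refl) (simp add: left_diff_distrib)
  also have "(\<Sum>j=1..n. if u = j then real (Defs.degree n E u) * y u else 0) = (\<Sum>v=1..n. if E u v then y u else 0)"
  proof (cases "u \<in> {1..n}")
    case True
    then show ?thesis
      by (auto simp: deg sum_distrib_right intro!: sum.cong)
  next
    case False
    then show ?thesis
      using adj_vertices by (auto intro!: sum.neutral)
  qed
  finally show ?thesis
    by (simp add: sum_subtractf[symmetric] if_distrib cong: if_cong)
qed

lemma lap_form_eq_arc_sum:
  "lap_form n E x y = (\<Sum>(u, v)\<in>arcs n E. (x u - x v) * (y u - y v)) / 2"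
proof -
  have forward: "lap_form n E x y = (\<Sum>u=1..n. \<Sum>v=1..n. if E u v then x u * (y u - y v) else 0)"
    unfolding lap_form_def lap_apply_eq_sum_neighbours
    by (simp add: sum_distrib_left if_distrib cong: if_cong)
  also have "\<dots> = (\<Sum>u=1..n. \<Sum>v=1..n. if E u v then - (x v * (y u - y v)) else 0)"
    by (subst sum.swap) (intro sum.cong refl, simp add: adj_sym[of _ "_::nat"] algebra_simps)
  finally have backward: "lap_form n E x y = \<dots>" .
  have "2 * lap_form n E x y = (\<Sum>u=1..n. \<Sum>v=1..n. if E u v then (x u - x v) * (y u - y v) else 0)"
    unfolding mult_2 by (subst forward, subst backward) (simp add: sum.distrib[symmetric] algebra_simps if_distrib cong: if_cong)
  also have "\<dots> = (\<Sum>(u, v)\<in>{1..n} \<times> {1..n}. if E u v then (x u - x v) * (y u - y v) else 0)"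
    by (simp add: sum.cartesian_product)
  also have "\<dots> = (\<Sum>(u, v)\<in>arcs n E. (x u - x v) * (y u - y v))"
    by (simp add: arcs_def sum.inter_filter case_prod_beta)
  finally show ?thesis by simp
qed

lemma lap_form_sym: "lap_form n E x y = lap_form n E y x"
  by (simp add: lap_form_eq_arc_sum mult.commute)

lemma lap_quad_nonneg: "0 \<le> lap_quad n E x"
  by (simp add: lap_quad_eq_lap_form lap_form_eq_arc_sum sum_nonneg case_prod_beta)

lemma lap_form_Cauchy_Schwarz: "(lap_form n E x y)\<^sup>2 \<le> lap_quad n E x * lap_quad n E y"
  using Cauchy_Schwarz_ineq_sum[of "\<lambda>(u, v). x u - x v" "\<lambda>(u, v). y u - y v" "arcs n E"]
  by (simp add: lap_quad_eq_lap_form lap_form_eq_arc_sum power_divide power2_eq_square case_prod_beta)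

lemma lap_quad_abs_le: "lap_quad n E (\<lambda>u. \<bar>x u\<bar>) \<le> lap_quad n E x"
  unfolding lap_quad_eq_lap_form lap_form_eq_arc_sum
  by (intro divide_right_mono sum_mono)
    (auto simp: abs_le_square_iff[symmetric] abs_triangle_ineq3 simp flip: power2_eq_square)

lemma lap_apply_const: "lap_apply n E (\<lambda>_. c) u = 0"
  by (simp add: lap_apply_eq_sum_neighbours cong: if_cong)

lemma sum_lap_apply: "(\<Sum>u=1..n. lap_apply n E v u) = 0"
proof -
  have "(\<Sum>u=1..n. lap_apply n E v u) = lap_form n E (\<lambda>_. 1) v"
    by (simp add: lap_form_def)
  also have "\<dots> = lap_form n E v (\<lambda>_. 1)"
    by (rule lap_form_sym)
  also have "\<dots> = 0"
    by (simp add: lap_form_def lap_apply_const)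
  finally show ?thesis .
qed

lemma inverse_perron_le_rayleigh:
  assumes "x i = 0" and pos: "0 < (\<Sum>j=1..n. (x j)\<^sup>2)"
  shows "inverse_perron n E i \<le> lap_quad n E x / (\<Sum>j=1..n. (x j)\<^sup>2)"
proof -
  define N where "N = (\<Sum>j=1..n. (x j)\<^sup>2)"
  define y where "y = (\<lambda>u. 1 / sqrt N * \<bar>x u\<bar>)"
  have "lap_quad n E y \<in>
      {lap_quad n E x | x. (\<forall>j\<in>{1..n}. x j \<ge> 0) \<and> (\<Sum>j=1..n. (x j)\<^sup>2) = 1 \<and> x i = 0}"
    using pos \<open>x i = 0\<close>
    by (auto simp: y_def N_def power_divide sum_divide_distrib[symmetric])
  then have "inverse_perron n E i \<le> lap_quad n E y"
    unfolding inverse_perron_def by (rule cInf_lower) (auto intro: lap_quad_nonneg)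
  also have "lap_quad n E y = (1 / sqrt N)\<^sup>2 * lap_quad n E (\<lambda>u. \<bar>x u\<bar>)"
    unfolding y_def lap_quad_eq_lap_form lap_form_scale_left lap_form_scale_right
    by (simp add: power2_eq_square)
  also have "\<dots> = lap_quad n E (\<lambda>u. \<bar>x u\<bar>) / N"
    using pos by (simp add: N_def power_divide)
  also have "\<dots> \<le> lap_quad n E x / N"
    using pos lap_quad_abs_le by (simp add: N_def divide_right_mono)
  finally show ?thesis by (simp add: N_def)
qed

end

text \<open>The matrix \<open>L + e\<^sub>1 e\<^sub>1\<^sup>T\<close> with the 0-based indices of the matrix library. For a connected
  graph it is invertible, and a solution of \<open>(L + e\<^sub>1 e\<^sub>1\<^sup>T) v = b\<close> with \<open>\<Sum> b = 0\<close> has \<open>v\<^sub>1 = 0\<close>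
  (the columns of \<open>L\<close> sum to zero), hence solves \<open>L v = b\<close>.\<close>
definition grounded_laplacian_mat :: "nat \<Rightarrow> (nat \<Rightarrow> nat \<Rightarrow> bool) \<Rightarrow> real mat" where
  "grounded_laplacian_mat n E =
     mat n n (\<lambda>(a, c). laplacian n E (Suc a) (Suc c) + (if a = 0 \<and> c = 0 then 1 else 0))"

lemma grounded_laplacian_mat_mult_vec:
  assumes "dim_vec y = n" and "k < n"
  shows "(grounded_laplacian_mat n E *\<^sub>v y) $ k =
           lap_apply n E (\<lambda>u. y $ (u - 1)) (Suc k) + (if k = 0 then y $ 0 else 0)"
proof -
  have "(grounded_laplacian_mat n E *\<^sub>v y) $ k =
      (\<Sum>c<n. laplacian n E (Suc k) (Suc c) * y $ c) + (\<Sum>c<n. if k = 0 \<and> c = 0 then y $ 0 else 0)"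
    using assms unfolding sum.distrib[symmetric]
    by (simp add: grounded_laplacian_mat_def scalar_prod_def atLeast0LessThan)
      (intro sum.cong refl, auto simp: distrib_right)
  also have "(\<Sum>c<n. laplacian n E (Suc k) (Suc c) * y $ c) = lap_apply n E (\<lambda>u. y $ (u - 1)) (Suc k)"
    unfolding lap_apply_def by (simp add: sum.atLeast1_atMost_eq)
  finally show ?thesis
    using assms by (cases "k = 0") (simp_all add: sum.delta')
qed

lemma grounded_laplacian_mat_eq_shift:
  assumes "v = (\<lambda>u. y $ (u - 1))" and "dim_vec y = n"
  shows "grounded_laplacian_mat n E *\<^sub>v y = vec n (\<lambda>k. b (Suc k)) \<longleftrightarrow>
           (\<forall>u\<in>{1..n}. lap_apply n E v u + (if u = 1 then v 1 else 0) = b u)"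
proof -
  have "grounded_laplacian_mat n E *\<^sub>v y = vec n (\<lambda>k. b (Suc k)) \<longleftrightarrow>
      (\<forall>k<n. (grounded_laplacian_mat n E *\<^sub>v y) $ k = b (Suc k))"
    by (simp add: vec_eq_iff grounded_laplacian_mat_def)
  also have "\<dots> \<longleftrightarrow> (\<forall>k<n. lap_apply n E v (Suc k) + (if Suc k = 1 then v 1 else 0) = b (Suc k))"
    using assms by (simp add: grounded_laplacian_mat_mult_vec)
  also have "\<dots> \<longleftrightarrow> (\<forall>u\<in>{1..n}. lap_apply n E v u + (if u = 1 then v 1 else 0) = b u)"
    unfolding image_Suc_lessThan[symmetric] by auto
  finally show ?thesis .
qed

context graph_laplacian
begin

lemma grounded_solution_solves_laplacian:
  assumes eq: "\<forall>u\<in>{1..n}. lap_apply n E x u + (if u = 1 then x 1 else 0) = b u"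
    and b: "(\<Sum>u=1..n. b u) = 0" and "1 \<le> n"
  shows "x 1 = 0" and "\<forall>u\<in>{1..n}. lap_apply n E x u = b u"
proof -
  have "(\<Sum>u=1..n. lap_apply n E x u + (if u = 1 then x 1 else 0)) = 0"
    using eq b by simp
  then show x1: "x 1 = 0"
    using \<open>1 \<le> n\<close> sum_lap_apply[of x] by (simp add: sum.distrib)
  show "\<forall>u\<in>{1..n}. lap_apply n E x u = b u"
  proof
    fix u
    assume "u \<in> {1..n}"
    then have "lap_apply n E x u + (if u = 1 then x 1 else 0) = b u"
      using eq by blast
    then show "lap_apply n E x u = b u"
      using x1 by (cases "u = 1") simp_all
  qed
qed

end

locale connected_graph_laplacian = graph_laplacian +
  assumes connected: "graph_connected n E"
begin

lemma lap_kernel_const: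
  assumes "\<forall>u\<in>{1..n}. lap_apply n E v u = 0" and "a \<in> {1..n}" and "b \<in> {1..n}"
  shows "v a = v b"
proof -
  have "lap_form n E v v = 0"
    using assms(1) by (simp add: lap_form_def)
  then have "(\<Sum>(u, w)\<in>arcs n E. (v u - v w) * (v u - v w)) = 0"
    by (simp add: lap_form_eq_arc_sum)
  then have "\<forall>(u, w)\<in>arcs n E. (v u - v w) * (v u - v w) = 0"
    by (subst (asm) sum_nonneg_eq_0_iff) (auto simp: arcs_def)
  then have edge: "E u w \<Longrightarrow> v u = v w" for u w
    using adj_vertices by (fastforce simp: arcs_def)
  have "E\<^sup>*\<^sup>* a b"
    using connected assms by (simp add: graph_connected_def)
  then show ?thesis
    by (induction rule: rtranclp_induct) (auto dest: edge)
qed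

lemma det_grounded_laplacian_mat_neq_0:
  assumes "1 \<le> n"
  shows "det (grounded_laplacian_mat n E) \<noteq> 0"
proof
  assume "det (grounded_laplacian_mat n E) = 0"
  then obtain y where y: "y \<in> carrier_vec n" "y \<noteq> 0\<^sub>v n" "grounded_laplacian_mat n E *\<^sub>v y = 0\<^sub>v n"
    by (subst (asm) det_0_iff_vec_prod_zero_field) (auto simp: grounded_laplacian_mat_def)
  define x where "x = (\<lambda>u. y $ (u - 1))"
  have "dim_vec y = n"
    using y(1) by simp
  moreover have "grounded_laplacian_mat n E *\<^sub>v y = vec n (\<lambda>k. 0)"
    using y(3) by (simp add: zero_vec_def)
  ultimately have grounded: "\<forall>u\<in>{1..n}. lap_apply n E x u + (if u = 1 then x 1 else 0) = 0"
    using grounded_laplacian_mat_eq_shift[OF x_def, where b = "\<lambda>_. 0"] by blast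
  have "(\<Sum>u=1..n. 0::real) = 0"
    by simp
  from grounded_solution_solves_laplacian[OF grounded this assms]
  have "x 1 = 0" and kernel: "\<forall>u\<in>{1..n}. lap_apply n E x u = 0"
    by simp_all
  then have x_zero: "x u = 0" if "u \<in> {1..n}" for u
    using lap_kernel_const[OF kernel that, of 1] assms by simp
  have "y $ k = 0" if "k < n" for k
    using that x_zero[of "Suc k"] by (simp add: x_def)
  then show False
    using y(1,2) by (auto simp: vec_eq_iff)
qed

lemma laplacian_solvable:
  assumes "(\<Sum>u=1..n. b u) = 0"
  shows "\<exists>v. \<forall>u\<in>{1..n}. lap_apply n E v u = b u"
proof (cases "n = 0")
  case False
  let ?A = "grounded_laplacian_mat n E"
  have A: "?A \<in> carrier_mat n n"
    by (simp add: grounded_laplacian_mat_def)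
  obtain B where B: "B \<in> carrier_mat n n" "?A * B = 1\<^sub>m n"
    using det_non_zero_imp_unit[OF A det_grounded_laplacian_mat_neq_0] False
    unfolding Units_def ring_mat_def by auto
  define y where "y = B *\<^sub>v vec n (\<lambda>k. b (Suc k))"
  define v where "v = (\<lambda>u. y $ (u - 1))"
  have "?A *\<^sub>v y = vec n (\<lambda>k. b (Suc k))"
    unfolding y_def using A B by (simp add: assoc_mult_mat_vec[symmetric, of _ n n _ n])
  moreover have "dim_vec y = n"
    using B by (simp add: y_def)
  ultimately have "\<forall>u\<in>{1..n}. lap_apply n E v u + (if u = 1 then v 1 else 0) = b u"
    using grounded_laplacian_mat_eq_shift[OF v_def, where b = b] by blast
  moreover have "1 \<le> n"
    using False by simp
  ultimately show ?thesis
    using grounded_solution_solves_laplacian(2) assms by blast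
qed simp

end

text \<open>Column \<open>b\<close> of the Moore-Penrose pseudoinverse of the Laplacian.\<close>
definition green :: "nat \<Rightarrow> (nat \<Rightarrow> nat \<Rightarrow> bool) \<Rightarrow> nat \<Rightarrow> nat \<Rightarrow> real" where
  "green n E b = (SOME v. (\<forall>a\<in>{1..n}. lap_apply n E v a = (if a = b then 1 else 0) - 1 / real n)
                          \<and> (\<Sum>a=1..n. v a) = 0)"

context connected_graph_laplacian
begin

lemma green_spec:
  assumes "b \<in> {1..n}"
  shows "(\<forall>a\<in>{1..n}. lap_apply n E (green n E b) a = (if a = b then 1 else 0) - 1 / real n)
           \<and> (\<Sum>a=1..n. green n E b a) = 0"
proof -
  obtain v where v: "\<forall>a\<in>{1..n}. lap_apply n E v a = (if a = b then 1 else 0) - 1 / real n"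
    using laplacian_solvable[of "\<lambda>a. (if a = b then 1 else 0) - 1 / real n"] assms
    by (auto simp: sum_subtractf)
  define m where "m = (\<Sum>a=1..n. v a) / real n"
  have "lap_apply n E (\<lambda>u. v u - m) a = lap_apply n E v a" for a
    using lap_apply_diff[where f = v and h = "\<lambda>_. m"] lap_apply_const by simp
  then have "\<exists>v. (\<forall>a\<in>{1..n}. lap_apply n E v a = (if a = b then 1 else 0) - 1 / real n) \<and> (\<Sum>a=1..n. v a) = 0"
    using v assms by (intro exI[of _ "\<lambda>u. v u - m"]) (simp add: m_def sum_subtractf)
  from someI_ex[OF this] show ?thesis
    unfolding green_def .
qed

lemma lap_apply_green:
  "b \<in> {1..n} \<Longrightarrow> a \<in> {1..n} \<Longrightarrow> lap_apply n E (green n E b) a = (if a = b then 1 else 0) - 1 / real n"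
  using green_spec by blast

lemma sum_green: "b \<in> {1..n} \<Longrightarrow> (\<Sum>a=1..n. green n E b a) = 0"
  using green_spec by blast

lemma lap_form_green:
  assumes "b \<in> {1..n}"
  shows "lap_form n E x (green n E b) = x b - (\<Sum>u=1..n. x u) / real n"
proof -
  have "lap_form n E x (green n E b) = (\<Sum>u=1..n. (if u = b then x u else 0) - x u / real n)"
    unfolding lap_form_def
    by (intro sum.cong refl) (simp add: lap_apply_green[OF assms] algebra_simps)
  also have "\<dots> = x b - (\<Sum>u=1..n. x u) / real n"
    using assms by (simp add: sum_subtractf sum_divide_distrib)
  finally show ?thesis .
qed

lemma lap_form_green_diff:
  assumes "i \<in> {1..n}" and "j \<in> {1..n}"
  shows "lap_form n E x (\<lambda>u. green n E j u - green n E i u) = x j - x i"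
  using assms by (simp add: lap_form_diff_right lap_form_green)

lemma green_sym:
  assumes "a \<in> {1..n}" and "b \<in> {1..n}"
  shows "green n E b a = green n E a b"
  using lap_form_green[OF assms(1), of "green n E b"] lap_form_green[OF assms(2), of "green n E a"]
    lap_form_sym[of "green n E a" "green n E b"] sum_green[OF assms(1)] sum_green[OF assms(2)]
  by simp

lemma resistance_eq_green:
  assumes i: "i \<in> {1..n}" and j: "j \<in> {1..n}"
  shows "resistance n E i j = green n E i i + green n E j j - 2 * green n E i j"
proof -
  define v where "v = (\<lambda>u. green n E i u - green n E j u)"
  let ?P = "\<lambda>v. \<forall>u\<in>{1..n}. lap_apply n E v u = (if u = i then 1 else 0) - (if u = j then 1 else 0)"
  have v: "?P v"
    using lap_apply_green[OF i] lap_apply_green[OF j] by (simp add: v_def lap_apply_diff)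
  have "?P v' \<Longrightarrow> v' i - v' j = v i - v j" for v'
    using lap_kernel_const[of "\<lambda>u. v' u - v u" i j] v i j by (simp add: lap_apply_diff)
  then have "resistance n E i j = v i - v j"
    unfolding resistance_def using v by (intro the_equality) blast+
  then show ?thesis
    using green_sym[OF i j] by (simp add: v_def)
qed

lemma kirchhoff_eq_green_trace: "kirchhoff n E = real n * (\<Sum>i=1..n. green n E i i)"
proof -
  define f where "f i j = green n E i i + green n E j j - green n E i j - green n E j i" for i j
  have "kirchhoff n E = (\<Sum>i=1..n. \<Sum>j=i+1..n. f i j)"
    unfolding kirchhoff_def f_def
    by (intro sum.cong refl) (simp add: resistance_eq_green green_sym)
  moreover have "2 * (\<Sum>i=1..n. \<Sum>j=i+1..n. f i j) = (\<Sum>i=1..n. \<Sum>j=1..n. f i j)"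
    by (rule sum_upper_triangle_symmetric) (auto simp: f_def)
  moreover have rows: "(\<Sum>i=1..n. \<Sum>j=1..n. green n E i j) = 0"
    using sum_green by simp
  have "(\<Sum>i=1..n. \<Sum>j=1..n. green n E j i) = 0"
    using rows by (subst sum.swap)
  then have "(\<Sum>i=1..n. \<Sum>j=1..n. f i j) = 2 * real n * (\<Sum>i=1..n. green n E i i)"
    using rows by (simp add: f_def sum.distrib sum_subtractf sum_distrib_left mult.assoc)
  ultimately show ?thesis
    by simp
qed

lemma square_le_resistance_mult_lap_quad:
  assumes i: "i \<in> {1..n}" and j: "j \<in> {1..n}" and "x i = 0"
  shows "(x j)\<^sup>2 \<le> resistance n E i j * lap_quad n E x"
proof -
  define p where "p = (\<lambda>u. green n E j u - green n E i u)"
  have "x j = lap_form n E x p"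
    using lap_form_green_diff[OF i j] \<open>x i = 0\<close> by (simp add: p_def)
  moreover have "lap_quad n E p = resistance n E i j"
    using lap_form_green_diff[OF i j, of p] green_sym[OF i j]
    by (simp add: p_def lap_quad_eq_lap_form resistance_eq_green[OF i j])
  ultimately show ?thesis
    using lap_form_Cauchy_Schwarz[of x p] by (simp add: mult.commute)
qed

lemma inverse_perron_pos:
  assumes "2 \<le> n" and i: "i \<in> {1..n}"
  shows "0 < inverse_perron n E i"
proof -
  define Q where "Q = {lap_quad n E x | x. (\<forall>j\<in>{1..n}. x j \<ge> 0) \<and> (\<Sum>j=1..n. (x j)\<^sup>2) = 1 \<and> x i = 0}"
  define R where "R = (\<Sum>j=1..n. resistance n E i j)"
  have bound: "1 \<le> R * q" if "q \<in> Q" for q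
  proof -
    obtain x where x: "q = lap_quad n E x" "(\<Sum>j=1..n. (x j)\<^sup>2) = 1" "x i = 0"
      using \<open>q \<in> Q\<close> unfolding Q_def by blast
    have "(\<Sum>j=1..n. (x j)\<^sup>2) \<le> (\<Sum>j=1..n. resistance n E i j * q)"
      using square_le_resistance_mult_lap_quad[of i _ x, OF i _ x(3)] x(1) by (intro sum_mono) auto
    then show ?thesis
      using x(2) by (simp add: R_def sum_distrib_right)
  qed
  define j :: nat where "j = (if i = 1 then 2 else 1)"
  have j: "j \<in> {1..n}" "j \<noteq> i"
    using assms by (auto simp: j_def)
  define e where "e = (\<lambda>u. if u = j then 1 else 0 :: real)"
  have "(\<Sum>u=1..n. (e u)\<^sup>2) = 1"
    using j by (simp add: e_def if_distrib[of "\<lambda>x. x\<^sup>2"] cong: if_cong)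
  then have e: "lap_quad n E e \<in> Q"
    using j unfolding Q_def by (intro CollectI exI[of _ e]) (auto simp: e_def)
  then have "Q \<noteq> {}"
    by blast
  have "0 < R"
    using bound[OF e] lap_quad_nonneg[of e] by (smt (verit) mult_nonpos_nonneg)
  have "1 / R \<le> Inf Q"
  proof (rule cInf_greatest[OF \<open>Q \<noteq> {}\<close>])
    fix q
    assume "q \<in> Q"
    then show "1 / R \<le> q"
      using bound[of q] \<open>0 < R\<close> by (simp add: divide_le_eq mult.commute)
  qed
  moreover have "0 < 1 / R"
    using \<open>0 < R\<close> by simp
  moreover have "inverse_perron n E i = Inf Q"
    by (simp add: inverse_perron_def Q_def)
  ultimately show ?thesis
    by linarith
qed

lemma lap_quad_green_complement:
  assumes "i \<in> {1..n}"
  shows "lap_quad n E (\<lambda>u. green n E i i - green n E i u) = green n E i i"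
  using lap_form_green[OF assms, of "\<lambda>u. green n E i i - green n E i u"] assms sum_green[OF assms]
  by (simp add: lap_quad_eq_lap_form lap_form_diff_right lap_form_def lap_apply_const sum_subtractf)

lemma green_diag_Cauchy_Schwarz:
  assumes "i \<in> {1..n}"
  shows "(real n * green n E i i)\<^sup>2 \<le> (real n - 1) * (\<Sum>u=1..n. (green n E i i - green n E i u)\<^sup>2)"
proof -
  let ?w = "\<lambda>u. green n E i i - green n E i u"
  let ?V = "{1..n} - {i}"
  have "real n * green n E i i = (\<Sum>u\<in>?V. 1 * ?w u)"
    using assms sum_green[OF assms] by (simp add: sum_diff1 sum_subtractf algebra_simps)
  moreover have "(\<Sum>u=1..n. (?w u)\<^sup>2) = (\<Sum>u\<in>?V. (?w u)\<^sup>2)"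
    using assms by (simp add: sum_diff1)
  moreover have "(\<Sum>u\<in>?V. (1::real)\<^sup>2) = real n - 1"
    using assms by (simp add: of_nat_diff)
  ultimately show ?thesis
    using Cauchy_Schwarz_ineq_sum[of "\<lambda>_. 1" ?w ?V] by simp
qed

lemma green_diag_le_inverse_perron:
  assumes "2 \<le> n" and i: "i \<in> {1..n}"
  shows "real n ^ 2 * green n E i i / (real n - 1) \<le> inverse (inverse_perron n E i)"
proof -
  define N where "N = (\<Sum>u=1..n. (green n E i i - green n E i u)\<^sup>2)"
  have CS: "(real n * green n E i i)\<^sup>2 \<le> (real n - 1) * N"
    using green_diag_Cauchy_Schwarz[OF i] by (simp add: N_def)
  have alpha: "0 < inverse_perron n E i"
    by (rule inverse_perron_pos[OF assms])
  have "0 < real n - 1"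
    using assms by simp
  show ?thesis
  proof (cases "N = 0")
    case True
    then have "green n E i i = 0"
      using CS assms by simp
    then show ?thesis
      using alpha by simp
  next
    case False
    then have "0 < N"
      by (simp add: N_def order_neq_le_trans[OF _ sum_nonneg])
    then have rayleigh: "inverse_perron n E i \<le> green n E i i / N"
      using inverse_perron_le_rayleigh[of "\<lambda>u. green n E i i - green n E i u" i]
      by (simp add: N_def lap_quad_green_complement[OF i])
    then have "0 < green n E i i / N"
      using alpha by linarith
    then have "0 < green n E i i"
      using \<open>0 < N\<close> by (simp add: zero_less_divide_iff)
    moreover have "N / green n E i i \<le> inverse (inverse_perron n E i)"
      using le_imp_inverse_le[OF rayleigh alpha] by simp
    moreover have "real n ^ 2 * green n E i i / (real n - 1) \<le> N / green n E i i"
      using CS \<open>0 < real n - 1\<close> calculation(1)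
      by (simp add: divide_le_eq le_divide_eq power_mult_distrib power2_eq_square mult.commute mult.left_commute)
    ultimately show ?thesis
      by linarith
  qed
qed

end

theorem corollary4p3:
  fixes n :: nat and E :: "nat \<Rightarrow> nat \<Rightarrow> bool"
  assumes "simple_graph n E" and "graph_connected n E"
  shows "kirchhoff n E \<le> (real n - 1) / real n * (\<Sum>i=1..n. inverse (inverse_perron n E i))"
proof (cases "2 \<le> n")
  case False
  then have "n = 0 \<or> n = 1"
    by auto
  then show ?thesis
    by (auto simp: kirchhoff_def)
next
  case True
  interpret connected_graph_laplacian n E
    using assms by unfold_locales
  define t where "t = (\<Sum>i=1..n. green n E i i)"
  have "real n ^ 2 * t / (real n - 1) \<le> (\<Sum>i=1..n. inverse (inverse_perron n E i))"
    unfolding t_def sum_distrib_left sum_divide_distrib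
    by (intro sum_mono green_diag_le_inverse_perron[OF True])
  then have "(real n - 1) / real n * (real n ^ 2 * t / (real n - 1))
      \<le> (real n - 1) / real n * (\<Sum>i=1..n. inverse (inverse_perron n E i))"
    using True by (intro mult_left_mono) auto
  moreover have "(real n - 1) / real n * (real n ^ 2 * t / (real n - 1)) = real n * t"
    using True by (simp add: field_simps power2_eq_square)
  ultimately show ?thesis
    by (simp add: kirchhoff_eq_green_trace t_def)
qed

end
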